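(* For \(i=1,2\), let \(X_i\) be a nonempty set and \(\Phi_i\) a mapping with domain \(X_i^{2}\). Suppose that \(\preccurlyeq_{1} := u_{\Phi_1}^{t} \cup \Delta_{\Phi_1(X_1^{2})}\) and \(\preccurlyeq_{2} := u_{\Phi_2}^{t} \cup \Delta_{\Phi_2(X_2^{2})}\) are partial orders on \(\Phi_1(X_1^{2})\) and on \(\Phi_2(X_2^{2})\), respectively, and that \(\Phi_i\) is a \(\preccurlyeq_{i}\)-pseudoultrametric for \(i = 1, 2\). Then for every mapping \(g \colon X_1 \to X_2\) the following are equivalent: (i) \(g\) is a weak similarity for \(\Phi_1\) and \(\Phi_2\); (ii) \(g\) is a combinatorial similarity for \(\Phi_1\) and \(\Phi_2\).
   Context: For a mapping \(F\) with domain \(A\), \(F(A)\) denotes its range; \(\Delta_S=\{\langle s,s\rangle:s\in S\}\). For \(\Phi\) with domain \(X^2\) and \(Y=\Phi(X^2)\), \(\langle y_1,y_2\rangle\in u_\Phi\) iff \(y_1,y_2\in Y\) and there are \(x_1,x_2,x_3\in X\) with \(y_1=\Phi(x_1,x_3)\), \(y_2=\Phi(x_1,x_2)=\Phi(x_2,x_3)\); \(\gamma^t=\bigcup_{n\ge1}\gamma^n\) is the transitive closure (\(\gamma^{n+1}=\gamma^n\circ\gamma\), \(\langle x,y\rangle\in\alpha\circ\beta\) iff \(\exists z\): \(\langle x,z\rangle\in\alpha,\langle z,y\rangle\in\beta\)). For a poset \((Q,\preccurlyeq_Q)\) with smallest element \(q_0\), \(d\colon Z^2\to Q\) is a \(\preccurlyeq_Q\)-pseudoultrametric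 if \(d\) is symmetric, \(d(z,z)=q_0\) for all \(z\), and for every triple \(\langle z_1,z_2,z_3\rangle\) in \(Z\) there is a permutation \((i_1,i_2,i_3)\) of \((1,2,3)\) with \(d(z_{i_1},z_{i_3})\preccurlyeq_Q d(z_{i_1},z_{i_2})=d(z_{i_2},z_{i_3})\). A mapping \(g\colon X_1\to X_2\) is a combinatorial similarity for \(\Phi_1\) and \(\Phi_2\) if \(g\) is a bijection and there is a bijection \(f\colon\Phi_2(X_2^2)\to\Phi_1(X_1^2)\) with \(\Phi_1(x,y)=f(\Phi_2(g(x),g(y)))\) for all \(x,y\in X_1\). It is a weak similarity for \(\Phi_1\) and \(\Phi_2\) (viewed as \(\preccurlyeq_i\)-valued) if \(g\) is a bijection and there is such an \(f\) which is moreover an order isomorphism between the posets \((\Phi_2(X_2^2),\preccurlyeq_2)\) and \((\Phi_1(X_1^2),\preccurlyeq_1)\). *)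

theory Defs
  imports "HOL-Combinatorics.Permutations"
begin

text \<open>A mapping Phi with domain X^2 is modelled by a curried function, only its
values on X are relevant.\<close>

definition rng :: "'a set \<Rightarrow> ('a \<Rightarrow> 'a \<Rightarrow> 'b) \<Rightarrow> 'b set" where
  "rng X Phi = {Phi x y | x y. x \<in> X \<and> y \<in> X}"

definition u_rel :: "'a set \<Rightarrow> ('a \<Rightarrow> 'a \<Rightarrow> 'b) \<Rightarrow> ('b \<times> 'b) set" where
  "u_rel X Phi = {(y1, y2). y1 \<in> rng X Phi \<and> y2 \<in> rng X Phi \<and>
     (\<exists>x1\<in>X. \<exists>x2\<in>X. \<exists>x3\<in>X. y1 = Phi x1 x3 \<and> y2 = Phi x1 x2 \<and> Phi x1 x2 = Phi x2 x3)}"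

definition ord_rel :: "'a set \<Rightarrow> ('a \<Rightarrow> 'a \<Rightarrow> 'b) \<Rightarrow> ('b \<times> 'b) set" where
  "ord_rel X Phi = (u_rel X Phi)\<^sup>+ \<union> Id_on (rng X Phi)"

definition pseudoultrametric ::
  "'a set \<Rightarrow> ('a \<Rightarrow> 'a \<Rightarrow> 'b) \<Rightarrow> 'b set \<Rightarrow> ('b \<times> 'b) set \<Rightarrow> bool" where
  "pseudoultrametric Z d Q le \<longleftrightarrow>
     (\<forall>x\<in>Z. \<forall>y\<in>Z. d x y \<in> Q) \<and>
     (\<exists>q0\<in>Q. (\<forall>q\<in>Q. (q0, q) \<in> le) \<and>
       (\<forall>x\<in>Z. \<forall>y\<in>Z. d x y = d y x) \<and>
       (\<forall>z\<in>Z. d z z = q0) \<and>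
       (\<forall>z1\<in>Z. \<forall>z2\<in>Z. \<forall>z3\<in>Z. \<exists>p::nat \<Rightarrow> nat. p permutes {1::nat, 2, 3} \<and>
          (let z = (\<lambda>i::nat. if i = 1 then z1 else if i = 2 then z2 else z3) in
            (d (z (p 1)) (z (p 3)), d (z (p 1)) (z (p 2))) \<in> le \<and>
            d (z (p 1)) (z (p 2)) = d (z (p 2)) (z (p 3)))))"

definition comb_similarity ::
  "'a set \<Rightarrow> ('a \<Rightarrow> 'a \<Rightarrow> 'b) \<Rightarrow> 'c set \<Rightarrow> ('c \<Rightarrow> 'c \<Rightarrow> 'd) \<Rightarrow> ('a \<Rightarrow> 'c) \<Rightarrow> bool" where
  "comb_similarity X1 Phi1 X2 Phi2 g \<longleftrightarrow> bij_betw g X1 X2 \<and>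
     (\<exists>f. bij_betw f (rng X2 Phi2) (rng X1 Phi1) \<and>
        (\<forall>x\<in>X1. \<forall>y\<in>X1. Phi1 x y = f (Phi2 (g x) (g y))))"

definition weak_similarity ::
  "'a set \<Rightarrow> ('a \<Rightarrow> 'a \<Rightarrow> 'b) \<Rightarrow> ('b \<times> 'b) set \<Rightarrow>
   'c set \<Rightarrow> ('c \<Rightarrow> 'c \<Rightarrow> 'd) \<Rightarrow> ('d \<times> 'd) set \<Rightarrow> ('a \<Rightarrow> 'c) \<Rightarrow> bool" where
  "weak_similarity X1 Phi1 le1 X2 Phi2 le2 g \<longleftrightarrow> bij_betw g X1 X2 \<and>
     (\<exists>f. bij_betw f (rng X2 Phi2) (rng X1 Phi1) \<and>
        (\<forall>a\<in>rng X2 Phi2. \<forall>b\<in>rng X2 Phi2. (a, b) \<in> le2 \<longleftrightarrow> (f a, f b) \<in> le1) \<and>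
        (\<forall>x\<in>X1. \<forall>y\<in>X1. Phi1 x y = f (Phi2 (g x) (g y))))"

end

theory Submission
  imports Defs
begin

text \<open>If g is a combinatorial similarity with distance bijection f, then every triple
x1, x2, x3 in X1 with Phi1 x1 x2 = Phi1 x2 x3 maps to a triple in X2 with the same
property (f is injective) and conversely, so f maps u_Phi2 onto u_Phi1. An injective map
commutes with transitive closure, so f maps the relation of Phi2 onto that of Phi1 and is
therefore automatically an order isomorphism.\<close>

lemma trancl_map_prod_image:
  assumes "inj_on f A" and "r \<subseteq> A \<times> A"
  shows "(map_prod f f ` r)\<^sup>+ = map_prod f f ` r\<^sup>+"
proof
  show "map_prod f f ` r\<^sup>+ \<subseteq> (map_prod f f ` r)\<^sup>+"
  proof clarify
    fix a b assume "(a, b) \<in> r\<^sup>+"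
    then show "(f a, f b) \<in> (map_prod f f ` r)\<^sup>+"
      by induction (auto intro: trancl_into_trancl)
  qed
next
  have r_trancl: "r\<^sup>+ \<subseteq> A \<times> A"
    using assms(2) by (rule trancl_subset_Sigma)
  show "(map_prod f f ` r)\<^sup>+ \<subseteq> map_prod f f ` r\<^sup>+"
  proof clarify
    fix c d assume "(c, d) \<in> (map_prod f f ` r)\<^sup>+"
    then show "(c, d) \<in> map_prod f f ` r\<^sup>+"
    proof (induction rule: trancl_induct)
      case (base d)
      then show ?case by auto
    next
      case (step y z)
      then obtain a b where ab: "(a, b) \<in> r\<^sup>+" "c = f a" "y = f b" by auto
      from step.hyps(2) obtain b' z' where b'z': "(b', z') \<in> r" "y = f b'" "z = f z'" by auto
      have "b = b'"
        using inj_onD[OF assms(1)] ab b'z' r_trancl assms(2) by blast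
      with ab b'z' have "(a, z') \<in> r\<^sup>+" by auto
      with ab b'z' show ?case by force
    qed
  qed
qed

lemma rng_memI: "Phi x y \<in> rng X Phi" if "x \<in> X" "y \<in> X"
  using that unfolding rng_def by blast

lemma u_relI:
  assumes "x1 \<in> X" "x2 \<in> X" "x3 \<in> X" "Phi x1 x2 = Phi x2 x3"
  shows "(Phi x1 x3, Phi x1 x2) \<in> u_rel X Phi"
  using assms rng_memI[of x1 X x3 Phi] rng_memI[of x1 X x2 Phi] unfolding u_rel_def by blast

lemma u_relE:
  assumes "(y1, y2) \<in> u_rel X Phi"
  obtains x1 x2 x3 where "x1 \<in> X" "x2 \<in> X" "x3 \<in> X"
    "y1 = Phi x1 x3" "y2 = Phi x1 x2" "Phi x1 x2 = Phi x2 x3"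
  using assms unfolding u_rel_def by blast

lemma u_rel_subset_rng: "u_rel X Phi \<subseteq> rng X Phi \<times> rng X Phi"
  unfolding u_rel_def by auto

lemma ord_rel_subset_rng: "ord_rel X Phi \<subseteq> rng X Phi \<times> rng X Phi"
  using trancl_subset_Sigma[OF u_rel_subset_rng] unfolding ord_rel_def by auto

context
  fixes X1 :: "'a set" and Phi1 :: "'a \<Rightarrow> 'a \<Rightarrow> 'b"
    and X2 :: "'c set" and Phi2 :: "'c \<Rightarrow> 'c \<Rightarrow> 'd"
    and g :: "'a \<Rightarrow> 'c" and f :: "'d \<Rightarrow> 'b"
  assumes g_onto: "g ` X1 = X2"
    and f_inj: "inj_on f (rng X2 Phi2)"
    and Phi1_eq: "\<forall>x\<in>X1. \<forall>y\<in>X1. Phi1 x y = f (Phi2 (g x) (g y))"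
begin

lemma rng_transfer: "rng X1 Phi1 = f ` rng X2 Phi2"
proof (intro equalityI subsetI)
  fix z assume "z \<in> rng X1 Phi1"
  then obtain x y where "x \<in> X1" "y \<in> X1" "z = Phi1 x y"
    unfolding rng_def by blast
  then have "z = f (Phi2 (g x) (g y))" and "g x \<in> X2" "g y \<in> X2"
    using Phi1_eq g_onto by auto
  then show "z \<in> f ` rng X2 Phi2"
    by (blast intro: rng_memI)
next
  fix z assume "z \<in> f ` rng X2 Phi2"
  then obtain x y where "x \<in> X1" "y \<in> X1" "z = f (Phi2 (g x) (g y))"
    unfolding rng_def g_onto[symmetric] by blast
  then show "z \<in> rng X1 Phi1"
    using Phi1_eq rng_memI by metis
qed

lemma u_rel_transfer: "u_rel X1 Phi1 = map_prod f f ` u_rel X2 Phi2"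
proof (intro equalityI subsetI; clarify)
  fix c d assume "(c, d) \<in> u_rel X1 Phi1"
  then obtain a1 a2 a3 where a: "a1 \<in> X1" "a2 \<in> X1" "a3 \<in> X1"
    and "c = Phi1 a1 a3" "d = Phi1 a1 a2" and isosceles: "Phi1 a1 a2 = Phi1 a2 a3"
    by (rule u_relE)
  then have cd: "(c, d) = map_prod f f (Phi2 (g a1) (g a3), Phi2 (g a1) (g a2))"
    using Phi1_eq by simp
  have g_a: "g a1 \<in> X2" "g a2 \<in> X2" "g a3 \<in> X2"
    using a g_onto by auto
  have "f (Phi2 (g a1) (g a2)) = f (Phi2 (g a2) (g a3))"
    using a isosceles Phi1_eq by simp
  then have "Phi2 (g a1) (g a2) = Phi2 (g a2) (g a3)"
    by (rule inj_onD[OF f_inj _ rng_memI[OF g_a(1,2)] rng_memI[OF g_a(2,3)]])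
  with g_a have "(Phi2 (g a1) (g a3), Phi2 (g a1) (g a2)) \<in> u_rel X2 Phi2"
    by (rule u_relI)
  with cd show "(c, d) \<in> map_prod f f ` u_rel X2 Phi2"
    by (rule image_eqI)
next
  fix a b assume "(a, b) \<in> u_rel X2 Phi2"
  then obtain x1 x2 x3 where x: "x1 \<in> X2" "x2 \<in> X2" "x3 \<in> X2"
    and ab: "a = Phi2 x1 x3" "b = Phi2 x1 x2" and isosceles: "Phi2 x1 x2 = Phi2 x2 x3"
    by (rule u_relE)
  obtain a1 a2 a3 where a: "a1 \<in> X1" "a2 \<in> X1" "a3 \<in> X1"
    and "x1 = g a1" "x2 = g a2" "x3 = g a3"
    using x(1-3) unfolding g_onto[symmetric] by (elim imageE)
  with ab isosceles Phi1_eq have "(f a, f b) = (Phi1 a1 a3, Phi1 a1 a2)"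
    and "Phi1 a1 a2 = Phi1 a2 a3"
    by simp_all
  with a show "(f a, f b) \<in> u_rel X1 Phi1"
    by (metis u_relI)
qed

lemma ord_rel_transfer: "ord_rel X1 Phi1 = map_prod f f ` ord_rel X2 Phi2"
proof -
  have "(u_rel X1 Phi1)\<^sup>+ = map_prod f f ` (u_rel X2 Phi2)\<^sup>+"
    unfolding u_rel_transfer using f_inj u_rel_subset_rng by (rule trancl_map_prod_image)
  moreover have "Id_on (rng X1 Phi1) = map_prod f f ` Id_on (rng X2 Phi2)"
    unfolding rng_transfer by auto
  ultimately show ?thesis
    unfolding ord_rel_def by (simp add: image_Un)
qed

lemma ord_rel_transfer_iff:
  assumes "a \<in> rng X2 Phi2" and "b \<in> rng X2 Phi2"
  shows "(a, b) \<in> ord_rel X2 Phi2 \<longleftrightarrow> (f a, f b) \<in> ord_rel X1 Phi1"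
proof -
  have "inj_on (map_prod f f) (rng X2 Phi2 \<times> rng X2 Phi2)"
    using f_inj f_inj by (rule map_prod_inj_on)
  then have "map_prod f f (a, b) \<in> map_prod f f ` ord_rel X2 Phi2 \<longleftrightarrow> (a, b) \<in> ord_rel X2 Phi2"
    by (rule inj_on_image_mem_iff) (use assms ord_rel_subset_rng in auto)
  then show ?thesis
    unfolding ord_rel_transfer by simp
qed

end

theorem theorem4p4:
  fixes X1 :: "'a set" and Phi1 :: "'a \<Rightarrow> 'a \<Rightarrow> 'b"
    and X2 :: "'c set" and Phi2 :: "'c \<Rightarrow> 'c \<Rightarrow> 'd"
    and g :: "'a \<Rightarrow> 'c"
  assumes "X1 \<noteq> {}" and "X2 \<noteq> {}"
    and "partial_order_on (rng X1 Phi1) (ord_rel X1 Phi1)"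
    and "partial_order_on (rng X2 Phi2) (ord_rel X2 Phi2)"
    and "pseudoultrametric X1 Phi1 (rng X1 Phi1) (ord_rel X1 Phi1)"
    and "pseudoultrametric X2 Phi2 (rng X2 Phi2) (ord_rel X2 Phi2)"
    and "g ` X1 \<subseteq> X2"
  shows "weak_similarity X1 Phi1 (ord_rel X1 Phi1) X2 Phi2 (ord_rel X2 Phi2) g
     \<longleftrightarrow> comb_similarity X1 Phi1 X2 Phi2 g"
proof
  assume "weak_similarity X1 Phi1 (ord_rel X1 Phi1) X2 Phi2 (ord_rel X2 Phi2) g"
  then show "comb_similarity X1 Phi1 X2 Phi2 g"
    unfolding weak_similarity_def comb_similarity_def by blast
next
  assume "comb_similarity X1 Phi1 X2 Phi2 g"
  then obtain f where g: "bij_betw g X1 X2" and f: "bij_betw f (rng X2 Phi2) (rng X1 Phi1)"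
    and Phi1_eq: "\<forall>x\<in>X1. \<forall>y\<in>X1. Phi1 x y = f (Phi2 (g x) (g y))"
    unfolding comb_similarity_def by blast
  have g_onto: "g ` X1 = X2" and f_inj: "inj_on f (rng X2 Phi2)"
    using g f by (simp_all add: bij_betw_def)
  have "\<forall>a\<in>rng X2 Phi2. \<forall>b\<in>rng X2 Phi2.
      (a, b) \<in> ord_rel X2 Phi2 \<longleftrightarrow> (f a, f b) \<in> ord_rel X1 Phi1"
    using ord_rel_transfer_iff[OF g_onto f_inj Phi1_eq] by blast
  with g f Phi1_eq show "weak_similarity X1 Phi1 (ord_rel X1 Phi1) X2 Phi2 (ord_rel X2 Phi2) g"
    unfolding weak_similarity_def by blast
qed

end
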